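(* Let $X_1,\dots,X_n$ be independent random variables with $X_i\sim\mathrm{Geo}(p_i)$, where $0<p_1\le p_2\le\dots\le p_n<1$, let $X=\sum_{i=1}^n X_i$ and $\mu=\mathbb{E}[X]=\sum_{i=1}^n 1/p_i$. Then for every $t\ge 0$, $$\Pr\big(X>3(\mu+t)\big)\le e^{-\frac{p_1}{2}\mu-p_1 t}.$$
   Context: $\mathrm{Geo}(p)$ denotes the geometric distribution on $\{1,2,\dots\}$ with $\Pr(X=k)=(1-p)^{k-1}p$. *)

theory Defs
  imports "HOL-Probability.Probability"
begin

text \<open>Geometric distribution on {1,2,...}: Pr(X=k) = (1-p)^(k-1) p,
  obtained by shifting the library's geometric_pmf (supported on {0,1,...}).\<close>
definition geo_pmf :: "real \<Rightarrow> nat pmf" where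
  "geo_pmf p = map_pmf Suc (geometric_pmf p)"

end

theory Submission
  imports Defs
begin

text \<open>Chernoff's method with the parameter \<open>\<theta> = p\<^sub>1/3\<close>. The moment generating function
  of \<open>Geo(p)\<close> is \<open>p e\<^sup>\<theta> / (1 - (1-p) e\<^sup>\<theta>)\<close>; for \<open>3\<theta> \<le> p\<close> an elementary estimate
  bounds it by \<open>exp (3\<theta>/(2p))\<close>. By independence the moment generating function of the
  sum is at most \<open>exp (3\<theta>\<mu>/2) = exp (p\<^sub>1\<mu>/2)\<close>, and Markov's inequality at level
  \<open>3(\<mu> + t)\<close> contributes the factor \<open>exp (-p\<^sub>1(\<mu> + t))\<close>.\<close>

lemma mono_on_atLeastAtMost_Suc:
  fixes f :: "nat \<Rightarrow> 'a::preorder"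
  assumes "\<And>i. m \<le> i \<Longrightarrow> i < n \<Longrightarrow> f i \<le> f (Suc i)"
  shows "mono_on {m..n} f"
proof (rule mono_onI)
  fix i j assume "i \<in> {m..n}" "j \<in> {m..n}" "i \<le> j"
  then have "m \<le> i" "i \<le> j" "j \<le> n" by auto
  from \<open>i \<le> j\<close> \<open>j \<le> n\<close> show "f i \<le> f j"
  proof (induction j rule: dec_induct)
    case (step k)
    then show ?case using assms[of k] \<open>m \<le> i\<close> order_trans by fastforce
  qed simp
qed

lemma exp_neg_three_halves_le_one_minus:
  fixes u :: real
  assumes "0 \<le> u" "u \<le> 1/3"
  shows "exp (- (3/2 * u)) \<le> 1 - u"
proof -
  have taylor: "1 + 3/2*u + (3/2*u)^2/2 \<le> exp (3/2*u)"
    by (rule exp_lower_Taylor_quadratic) (use assms in auto)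
  have "u*u \<le> u * (1/3)" "u*u*u \<le> u*u*(1/3)"
    using assms by (intro mult_left_mono; simp)+
  moreover have "(1-u) * (1 + 3/2*u + (3/2*u)^2/2) = 1 + u/2 - 3/8*(u*u) - 9/8*(u*u*u)"
    by (simp add: power2_eq_square field_simps)
  ultimately have "1 \<le> (1-u) * (1 + 3/2*u + (3/2*u)^2/2)"
    using assms by linarith
  also have "\<dots> \<le> (1-u) * exp (3/2*u)"
    using assms taylor by (intro mult_left_mono) auto
  finally show ?thesis by (simp add: exp_minus field_simps)
qed

text \<open>Lower bound on the denominator of the moment generating function of \<open>Geo(p)\<close>;
  it gives convergence and the bound \<open>exp (3\<theta>/(2p))\<close> at once.\<close>

lemma geo_mgf_denominator_ge:
  fixes p \<theta> :: real
  assumes "0 < p" "0 \<le> \<theta>" "3 * \<theta> \<le> p"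
  shows "p * exp \<theta> * exp (- (3 * \<theta> / (2 * p))) \<le> 1 - (1 - p) * exp \<theta>"
proof -
  define u where "u = (1 - exp (- \<theta>)) / p"
  have "1 - \<theta> \<le> exp (- \<theta>)"
    using exp_ge_add_one_self[of "- \<theta>"] by simp
  then have u_le: "u \<le> \<theta> / p"
    unfolding u_def using assms by (simp add: divide_right_mono)
  have "\<theta> / p \<le> 1/3"
    using assms by (simp add: field_simps)
  moreover have "0 \<le> u"
    unfolding u_def using assms by simp
  ultimately have "exp (- (3/2 * u)) \<le> 1 - u"
    using u_le by (intro exp_neg_three_halves_le_one_minus) linarith+
  moreover have "exp (- (3 * \<theta> / (2 * p))) \<le> exp (- (3/2 * u))"
    using u_le by simp
  ultimately have "exp (- (3 * \<theta> / (2 * p))) \<le> 1 - u"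
    by linarith
  then have "p * exp \<theta> * exp (- (3 * \<theta> / (2 * p))) \<le> p * exp \<theta> * (1 - u)"
    using assms by (intro mult_left_mono) auto
  also have "\<dots> = 1 - (1 - p) * exp \<theta>"
    unfolding u_def using assms by (simp add: field_simps exp_minus)
  finally show ?thesis .
qed

lemma nn_integral_geo_pmf_exp:
  fixes p \<theta> :: real
  assumes "0 < p" "p < 1" "(1 - p) * exp \<theta> < 1"
  shows "(\<integral>\<^sup>+k. ennreal (exp (\<theta> * real k)) \<partial>measure_pmf (geo_pmf p))
         = ennreal (p * exp \<theta> / (1 - (1 - p) * exp \<theta>))"
proof -
  have "(\<integral>\<^sup>+k. ennreal (exp (\<theta> * real k)) \<partial>measure_pmf (geo_pmf p))
      = (\<Sum>k. ennreal (pmf (geometric_pmf p) k) * ennreal (exp (\<theta> * real (Suc k))))"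
    unfolding geo_pmf_def nn_integral_map_pmf
    by (simp add: nn_integral_measure_pmf nn_integral_count_space_nat)
  also have "\<dots> = (\<Sum>k. ennreal (p * exp \<theta> * ((1 - p) * exp \<theta>) ^ k))"
    using assms
    by (intro suminf_cong)
      (simp add: ennreal_mult'[symmetric] exp_of_nat2_mult power_mult_distrib distrib_left
        exp_add mult_ac)
  also have "\<dots> = ennreal (p * exp \<theta> * (1 / (1 - (1 - p) * exp \<theta>)))"
    using assms by (intro suminf_ennreal_eq sums_mult geometric_sums) auto
  finally show ?thesis by simp
qed

lemma nn_integral_geo_pmf_exp_le:
  fixes p \<theta> :: real
  assumes "0 < p" "p < 1" "0 \<le> \<theta>" "3 * \<theta> \<le> p"
  shows "(\<integral>\<^sup>+k. ennreal (exp (\<theta> * real k)) \<partial>measure_pmf (geo_pmf p))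
         \<le> ennreal (exp (3 * \<theta> / (2 * p)))"
proof -
  have denom: "p * exp \<theta> * exp (- (3 * \<theta> / (2 * p))) \<le> 1 - (1 - p) * exp \<theta>"
    using assms by (intro geo_mgf_denominator_ge) auto
  moreover have "0 < p * exp \<theta> * exp (- (3 * \<theta> / (2 * p)))"
    using assms by simp
  ultimately have pos: "0 < 1 - (1 - p) * exp \<theta>"
    by linarith
  have "p * exp \<theta> / (1 - (1 - p) * exp \<theta>) \<le> exp (3 * \<theta> / (2 * p))"
    using denom pos by (simp add: exp_minus field_simps)
  then show ?thesis
    using assms pos by (subst nn_integral_geo_pmf_exp) (auto intro: ennreal_leI)
qed

lemma (in prob_space) nn_integral_exp_geo_le:
  assumes "random_variable (count_space UNIV) Y"
    and "distr M (count_space UNIV) Y = measure_pmf (geo_pmf p)"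
    and "0 < p" "p < 1" "0 \<le> \<theta>" "3 * \<theta> \<le> p"
  shows "(\<integral>\<^sup>+\<omega>. ennreal (exp (\<theta> * real (Y \<omega>))) \<partial>M) \<le> ennreal (exp (3 * \<theta> / (2 * p)))"
proof -
  have "(\<integral>\<^sup>+\<omega>. ennreal (exp (\<theta> * real (Y \<omega>))) \<partial>M)
      = (\<integral>\<^sup>+k. ennreal (exp (\<theta> * real k)) \<partial>measure_pmf (geo_pmf p))"
    using assms(1) by (subst nn_integral_distr[symmetric]) (auto simp: assms(2))
  also have "\<dots> \<le> ennreal (exp (3 * \<theta> / (2 * p)))"
    using assms(3-6) by (rule nn_integral_geo_pmf_exp_le)
  finally show ?thesis .
qed

lemma (in prob_space) Chernoff_indep_sum_ge:
  assumes "finite I" "indep_vars (\<lambda>_. borel) X I" "0 < s"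
  shows "emeasure M {x \<in> space M. a \<le> (\<Sum>i\<in>I. X i x)}
         \<le> ennreal (exp (- s * a)) * (\<Prod>i\<in>I. \<integral>\<^sup>+x. ennreal (exp (s * X i x)) \<partial>M)"
proof -
  have [measurable]: "X i \<in> borel_measurable M" if "i \<in> I" for i
    using assms(2) that unfolding indep_vars_def by auto
  have "emeasure M {x \<in> space M. a \<le> (\<Sum>i\<in>I. X i x)}
      \<le> ennreal (exp (- s * a))
          * (\<integral>\<^sup>+x. ennreal (exp (s * (\<Sum>i\<in>I. X i x))) * indicator (space M) x \<partial>M)"
    using assms by (intro Chernoff_ineq_nn_integral_ge) auto
  also have "(\<integral>\<^sup>+x. ennreal (exp (s * (\<Sum>i\<in>I. X i x))) * indicator (space M) x \<partial>M)
      = (\<integral>\<^sup>+x. (\<Prod>i\<in>I. ennreal (exp (s * X i x))) \<partial>M)"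
    by (intro nn_integral_cong)
      (simp add: sum_distrib_left exp_sum assms(1) prod_ennreal)
  also have "\<dots> = (\<Prod>i\<in>I. \<integral>\<^sup>+x. ennreal (exp (s * X i x)) \<partial>M)"
    by (intro indep_vars_nn_integral assms(1) indep_vars_compose2[OF assms(2)]) auto
  finally show ?thesis .
qed

theorem lemma8:
  fixes M :: "'a measure" and X :: "nat \<Rightarrow> 'a \<Rightarrow> nat" and p :: "nat \<Rightarrow> real"
    and n :: nat and t :: real
  assumes "prob_space M"
    and "n \<ge> 1"
    and "0 < p 1"
    and "\<And>i. 1 \<le> i \<Longrightarrow> i < n \<Longrightarrow> p i \<le> p (Suc i)"
    and "p n < 1"
    and "prob_space.indep_vars M (\<lambda>_. count_space UNIV) X {1..n}"
    and "\<And>i. i \<in> {1..n} \<Longrightarrow>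
           distr M (count_space UNIV) (X i) = measure_pmf (geo_pmf (p i))"
    and "t \<ge> 0"
  shows "measure M {\<omega> \<in> space M.
            real (\<Sum>i=1..n. X i \<omega>) > 3 * ((\<Sum>i=1..n. 1 / p i) + t)}
         \<le> exp (- (p 1 / 2) * (\<Sum>i=1..n. 1 / p i) - p 1 * t)"
proof -
  interpret prob_space M by fact
  define \<mu> where "\<mu> = (\<Sum>i=1..n. 1 / p i)"
  define \<theta> where "\<theta> = p 1 / 3"
  have mono_p: "mono_on {1..n} p"
    using assms(4) by (rule mono_on_atLeastAtMost_Suc)
  have p_bounds: "p 1 \<le> p i" "p i < 1" if "i \<in> {1..n}" for i
    using mono_onD[OF mono_p, of 1 i] mono_onD[OF mono_p, of i n] that assms(2,5) by auto
  have measX: "X i \<in> measurable M (count_space UNIV)" if "i \<in> {1..n}" for i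
    using assms(6) that unfolding indep_vars_def by auto
  have mgf_X: "(\<integral>\<^sup>+\<omega>. ennreal (exp (\<theta> * real (X i \<omega>))) \<partial>M) \<le> ennreal (exp (p 1 / (2 * p i)))"
    if i: "i \<in> {1..n}" for i
    using nn_integral_exp_geo_le[OF measX[OF i] assms(7)[OF i], of \<theta>] p_bounds[OF i] assms(3)
    unfolding \<theta>_def by simp
  have "(\<lambda>\<omega>. \<Sum>i=1..n. real (X i \<omega>)) \<in> borel_measurable M"
    using measX by (auto intro!: borel_measurable_sum measurable_compose[OF measX])
  then have "emeasure M {\<omega> \<in> space M. real (\<Sum>i=1..n. X i \<omega>) > 3 * (\<mu> + t)}
      \<le> emeasure M {\<omega> \<in> space M. 3 * (\<mu> + t) \<le> (\<Sum>i=1..n. real (X i \<omega>))}"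
    by (intro emeasure_mono) auto
  also have "\<dots> \<le> ennreal (exp (- \<theta> * (3 * (\<mu> + t))))
      * (\<Prod>i=1..n. \<integral>\<^sup>+\<omega>. ennreal (exp (\<theta> * real (X i \<omega>))) \<partial>M)"
    using assms(3,6) unfolding \<theta>_def
    by (intro Chernoff_indep_sum_ge indep_vars_compose2[where Y = "\<lambda>_. real"]) auto
  also have "\<dots> \<le> ennreal (exp (- \<theta> * (3 * (\<mu> + t)))) * (\<Prod>i=1..n. ennreal (exp (p 1 / (2 * p i))))"
    by (intro mult_left_mono prod_mono_ennreal mgf_X) auto
  also have "\<dots> = ennreal (exp (- \<theta> * (3 * (\<mu> + t)) + (\<Sum>i=1..n. p 1 / (2 * p i))))"
    by (simp add: prod_ennreal ennreal_mult'[symmetric] exp_sum[symmetric] exp_add[symmetric])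
  also have "(\<Sum>i=1..n. p 1 / (2 * p i)) = p 1 / 2 * \<mu>"
    unfolding \<mu>_def sum_distrib_left by (intro sum.cong) auto
  also have "- \<theta> * (3 * (\<mu> + t)) + p 1 / 2 * \<mu> = - (p 1 / 2) * \<mu> - p 1 * t"
    unfolding \<theta>_def by (simp add: algebra_simps)
  finally show ?thesis
    unfolding \<mu>_def measure_def by (intro enn2real_leI) auto
qed

end
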